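(* Let $t\ge 3$, let $\mathcal{A}$ be a nontrivial clutter on $E_t=\{1,\ldots,t\}$, and let $\mathcal{B}:=\mathfrak{B}(\mathcal{A})$ be its blocker. Then $T_{\mathcal{B}^{\triangledown}}=-T_{\mathcal{A}^{\triangledown}}\cdot\overline{\mathbf{U}}(2^t)$, and: (i) $\mathfrak{q}(T_{\mathcal{B}^{\triangledown}})=\mathfrak{q}(T_{\mathcal{A}^{\triangledown}})$ and $\boldsymbol{x}(T_{\mathcal{B}^{\triangledown}})=\boldsymbol{x}(T_{\mathcal{A}^{\triangledown}})\cdot\overline{\mathbf{U}}(2^t)\cdot\overline{\mathbf{T}}(2^t)$; (ii) if the set $\{k\in\{1,\ldots,2^t\}: T_{\mathcal{A}^{\triangledown}}(k)=-1\}$ is the disjoint union of integer intervals $[i_1,j_1]\,\dot\cup\cdots\dot\cup\,[i_\varrho,j_\varrho]$ with $i_k\le j_k$ and $j_k+2\le i_{k+1}$ for $1\le k\le \varrho-1$, then $\mathfrak{q}(T_{\mathcal{B}^{\triangledown}})=\mathfrak{q}(T_{\mathcal{A}^{\triangledown}})=2\varrho-1$, $\boldsymbol{x}(T_{\mathcal{A}^{\triangledown}})=\sum_{k=1}^{\varrho-1}\boldsymbol{\sigma}(j_k+1)-\sum_{\ell=1}^{\varrho}\boldsymbol{\sigma}(i_\ell)$, and $\boldsymbol{x}(T_{\mathcal{B}^{\triangledown}})=\sum_{k=1}^{\varrho-1}\boldsymbol{\sigma}(2^t-j_k+1)-\sum_{\ell=1}^{\varrho}\boldsymbol{\sigma}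(2^t-i_\ell+2)$.
   Context: A clutter on $E_t$ is a family of subsets of $E_t$ none of which contains another; it is nontrivial if it is neither the empty family nor $\{\emptyset\}$. For a family $\mathcal{C}$, $\mathcal{C}^{\triangledown}:=\{D\subseteq E_t: D\supseteq C\text{ for some }C\in\mathcal{C}\}$. The blocker $\mathfrak{B}(\mathcal{A})$ is the family of inclusion-minimal sets meeting every member of $\mathcal{A}$. Order the $2^t$ subsets of $E_t$ by increasing cardinality, and lexicographically among subsets of equal cardinality. For a family $\mathcal{F}$ of subsets of $E_t$, $\boldsymbol{\gamma}(\mathcal{F})\in\{0,1\}^{2^t}$ has $k$-th entry $1$ iff the $k$-th subset in this order lies in $\mathcal{F}$, and the characteristic tope is $T_{\mathcal{F}}:=\mathrm{T}^{(+)}_{2^t}-2\boldsymbol{\gamma}(\mathcal{F})\in\{1,-1\}^{2^t}$, where $\mathrm{T}^{(+)}_{2^t}$ is the all-ones row vector. Let $\boldsymbol{\sigma}(e)$ be the $e$-th standard unit vector of $\mathbb{R}^{2^t}$. Define $R^0:=\mathrm{T}^{(+)}_{2^t}$ and, for $1\le s\le 2^t-1$, $R^s$ the vector with entries $-1$ in positions $1,\ldots,s$ and $1$ elsewhere (first half of a symmetric cycle $R^0,\ldots,R^{2\cdot2^t-1}$, $R^{2^t+k}=-R^k$, in the hypercube graph on $\{1,-1\}^{2^t}$). For $T\in\{1,-1\}^{2^t}$, $\boldsymbol{x}(T)$ is the unique vector (in $\{-1,0,1\}^{2^t}$) with $T=\sum_{i=1}^{2^t}x_iR^{i-1}$, and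 $\mathfrak{q}(T)$ is the number of its nonzero entries. $\overline{\mathbf{U}}(2^t)$ is the backward identity matrix ($(i,j)$ entry $\delta_{i+j,2^t+1}$) and $\overline{\mathbf{T}}(2^t)$ the forward shift matrix ($(i,j)$ entry $\delta_{j-i,1}$), both of order $2^t$. *)

theory Defs
  imports Main "HOL-Library.Function_Algebras"
begin

(* Vectors in R^(2^t) are represented as functions nat => int, indexed 1..N
   (as in the paper), and equal to 0 outside {1..N}. Matrices: nat => nat => int. *)

definition clutter :: "nat \<Rightarrow> nat set set \<Rightarrow> bool" where
  "clutter t \<A> \<longleftrightarrow> (\<forall>A\<in>\<A>. A \<subseteq> {1..t}) \<and>
     (\<forall>A\<in>\<A>. \<forall>A'\<in>\<A>. A \<subseteq> A' \<longrightarrow> A = A')"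

definition nontrivial_clutter :: "nat \<Rightarrow> nat set set \<Rightarrow> bool" where
  "nontrivial_clutter t \<A> \<longleftrightarrow> clutter t \<A> \<and> \<A> \<noteq> {} \<and> \<A> \<noteq> {{}}"

definition upcl :: "nat \<Rightarrow> nat set set \<Rightarrow> nat set set" where
  "upcl t \<C> = {D. D \<subseteq> {1..t} \<and> (\<exists>C\<in>\<C>. C \<subseteq> D)}"

definition meets_all :: "nat set set \<Rightarrow> nat set \<Rightarrow> bool" where
  "meets_all \<A> B \<longleftrightarrow> (\<forall>A\<in>\<A>. B \<inter> A \<noteq> {})"

definition blocker :: "nat \<Rightarrow> nat set set \<Rightarrow> nat set set" where
  "blocker t \<A> = {B. B \<subseteq> {1..t} \<and> meets_all \<A> B \<and> (\<forall>B'. B' \<subset> B \<longrightarrow> \<not> meets_all \<A> B')}"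

definition subset_less :: "nat set \<Rightarrow> nat set \<Rightarrow> bool" where
  "subset_less S T \<longleftrightarrow> card S < card T \<or>
     (card S = card T \<and> (sorted_list_of_set S, sorted_list_of_set T) \<in> lexord {(a, b). a < (b::nat)})"

definition subset_pos :: "nat \<Rightarrow> nat set \<Rightarrow> nat" where
  "subset_pos t S = card {S'. S' \<subseteq> {1..t} \<and> subset_less S' S} + 1"

definition nth_subset :: "nat \<Rightarrow> nat \<Rightarrow> nat set" where
  "nth_subset t k = (THE S. S \<subseteq> {1..t} \<and> subset_pos t S = k)"

definition tope :: "nat \<Rightarrow> nat set set \<Rightarrow> nat \<Rightarrow> int" where
  "tope t \<F> = (\<lambda>k. if k \<in> {1..2^t} then (if nth_subset t k \<in> \<F> then -1 else 1) else 0)"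

definition Rvec :: "nat \<Rightarrow> nat \<Rightarrow> nat \<Rightarrow> int" where
  "Rvec N s = (\<lambda>k. if k \<in> {1..N} then (if k \<le> s then -1 else 1) else 0)"

definition xvec :: "nat \<Rightarrow> (nat \<Rightarrow> int) \<Rightarrow> nat \<Rightarrow> int" where
  "xvec N T = (THE x. (\<forall>k. x k \<in> {-1, 0, 1}) \<and> (\<forall>k. k \<notin> {1..N} \<longrightarrow> x k = 0) \<and>
      T = (\<lambda>k. \<Sum>i=1..N. x i * Rvec N (i - 1) k))"

definition qnum :: "nat \<Rightarrow> (nat \<Rightarrow> int) \<Rightarrow> nat" where
  "qnum N T = card {i \<in> {1..N}. xvec N T i \<noteq> 0}"

definition sigma :: "nat \<Rightarrow> nat \<Rightarrow> int" where
  "sigma e = (\<lambda>k. if k = e then 1 else 0)"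

definition Ubar :: "nat \<Rightarrow> nat \<Rightarrow> nat \<Rightarrow> int" where
  "Ubar N = (\<lambda>i j. if i + j = N + 1 then 1 else 0)"

definition Tbar :: "nat \<Rightarrow> nat \<Rightarrow> nat \<Rightarrow> int" where
  "Tbar N = (\<lambda>i j. if j = i + 1 then 1 else 0)"

definition vecmat :: "nat \<Rightarrow> (nat \<Rightarrow> int) \<Rightarrow> (nat \<Rightarrow> nat \<Rightarrow> int) \<Rightarrow> nat \<Rightarrow> int" where
  "vecmat N v M = (\<lambda>j. if j \<in> {1..N} then (\<Sum>i=1..N. v i * M i j) else 0)"

end

theory Submission
  imports Defs
begin

(* Complementation S |-> E_t - S reverses the order on subsets, and a set meets every member
   of A exactly when its complement contains none of them.  Hence the tope of B^triangledown is
   the negated reversal of the tope T of A^triangledown.  The coordinates of a (+-1)-vector with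
   respect to the cycle R^0, R^1, ... are its half differences, x_1 = (T_1 + T_N)/2 and
   x_k = (T_k - T_(k-1))/2, so negated reversal turns x(T) into x(T) reversed and shifted by one
   place, and when the (-1)-entries of T form well separated intervals the nonzero coordinates
   are -1 at the interval starts and +1 just after the interval ends (the last interval ends at
   N = 2^t, since E_t itself lies in A^triangledown, while the first entry of T is 1). *)

section \<open>The order on subsets and its reversal by complementation\<close>

lemma sorted_list_of_set_lexord_iff:
  fixes S T :: "'a::linorder set"
  assumes "finite S" "finite T" "card S = card T" "S \<noteq> T"
  shows "(sorted_list_of_set S, sorted_list_of_set T) \<in> lexord {(a, b). a < b}
     \<longleftrightarrow> Min (sym_diff S T) \<in> S"
  using assms
proof (induction "card S" arbitrary: S T)
  case 0
  then show ?case by auto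
next
  case (Suc n)
  have "S \<noteq> {}" "T \<noteq> {}" using Suc.hyps(2) Suc.prems by auto
  define a where "a = Min S"
  define b where "b = Min T"
  have a: "a \<in> S" "\<And>y. y \<in> S \<Longrightarrow> a \<le> y" and b: "b \<in> T" "\<And>y. y \<in> T \<Longrightarrow> b \<le> y"
    using \<open>S \<noteq> {}\<close> \<open>T \<noteq> {}\<close> Suc.prems a_def b_def by auto
  have fin: "finite (sym_diff S T)" using Suc.prems by auto
  have S_list: "sorted_list_of_set S = a # sorted_list_of_set (S - {a})"
    using sorted_list_of_set_nonempty[OF Suc.prems(1) \<open>S \<noteq> {}\<close>] a_def by simp
  have T_list: "sorted_list_of_set T = b # sorted_list_of_set (T - {b})"
    using sorted_list_of_set_nonempty[OF Suc.prems(2) \<open>T \<noteq> {}\<close>] b_def by simp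
  consider "a < b" | "b < a" | "a = b" using less_linear by blast
  then show ?case
  proof cases
    case 1
    have "Min (sym_diff S T) = a"
    proof (rule Min_eqI[OF fin])
      show "a \<le> x" if "x \<in> sym_diff S T" for x
        using that a(2) b(2)[of x] 1 by auto
      show "a \<in> sym_diff S T" using a(1) b(2)[of a] 1 by auto
    qed
    then show ?thesis using S_list T_list 1 a by simp
  next
    case 2
    have "Min (sym_diff S T) = b"
    proof (rule Min_eqI[OF fin])
      show "b \<le> x" if "x \<in> sym_diff S T" for x
        using that a(2)[of x] b(2) 2 by auto
      show "b \<in> sym_diff S T" using b(1) a(2)[of b] 2 by auto
    qed
    moreover have "b \<notin> S" using a(2)[of b] 2 by auto
    moreover have "\<not> a < b" "a \<noteq> b" using 2 by auto
    ultimately show ?thesis using S_list T_list by simp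
  next
    case 3
    have symdiff: "sym_diff (S - {a}) (T - {a}) = sym_diff S T"
      using a b 3 by blast
    have "Min (sym_diff S T) \<in> sym_diff S T"
      using fin Suc.prems(4) by (intro Min_in) auto
    then have "Min (sym_diff S T) \<noteq> a" using a b 3 by auto
    moreover have "(sorted_list_of_set (S - {a}), sorted_list_of_set (T - {a})) \<in> lexord {(a, b). a < b}
       \<longleftrightarrow> Min (sym_diff S T) \<in> S - {a}"
      unfolding symdiff[symmetric]
      by (rule Suc.hyps(1)) (use Suc.hyps(2) Suc.prems a b 3 in auto)
    ultimately show ?thesis using S_list T_list 3 by auto
  qed
qed

lemma subset_less_irrefl: "\<not> subset_less S S"
  unfolding subset_less_def by (auto simp: lexord_irreflexive)

lemma subset_less_trans:
  assumes "subset_less S T" "subset_less T U"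
  shows "subset_less S U"
proof (cases "card S < card T \<or> card T < card U")
  case True
  then show ?thesis using assms unfolding subset_less_def by auto
next
  case False
  have "trans {(a, b). a < (b::nat)}" by (auto simp: trans_def)
  with False assms show ?thesis
    unfolding subset_less_def by (metis lexord_trans)
qed

lemma subset_less_linear:
  assumes "finite S" "finite T" "S \<noteq> T"
  shows "subset_less S T \<or> subset_less T S"
proof (cases "card S = card T")
  case True
  let ?M = "Min (sym_diff S T)"
  have "?M \<in> sym_diff S T"
    using assms by (intro Min_in) auto
  then consider "?M \<in> S" | "?M \<in> T - S" by blast
  then show ?thesis
  proof cases
    case 1
    then show ?thesis
      using sorted_list_of_set_lexord_iff[OF assms(1,2) True assms(3)] True unfolding subset_less_def by simp
  next
    case 2
    have "Min (sym_diff T S) \<in> T" using 2 by (simp add: Un_commute)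
    then show ?thesis
      using sorted_list_of_set_lexord_iff[OF assms(2,1) True[symmetric]] assms(3) True
      unfolding subset_less_def by auto
  qed
qed (auto simp: subset_less_def)

lemma subset_less_Diff_iff:
  assumes "finite E" "S \<subseteq> E" "T \<subseteq> E"
  shows "subset_less (E - T) (E - S) \<longleftrightarrow> subset_less S T"
proof -
  have fin: "finite S" "finite T" using assms finite_subset by auto
  have card: "card (E - S) = card E - card S" "card (E - T) = card E - card T"
    using assms fin by (simp_all add: card_Diff_subset)
  have le: "card S \<le> card E" "card T \<le> card E" using assms by (simp_all add: card_mono)
  show ?thesis
  proof (cases "card S = card T")
    case False
    then show ?thesis using card le unfolding subset_less_def by auto
  next
    case True
    show ?thesis
    proof (cases "S = T")
      case True
      then show ?thesis using subset_less_irrefl by simp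
    next
      case False
      have "sym_diff (E - T) (E - S) = sym_diff S T" using assms by blast
      moreover have "Min (sym_diff S T) \<in> sym_diff S T" using fin False by (intro Min_in) auto
      ultimately have "Min (sym_diff (E - T) (E - S)) \<in> E - T \<longleftrightarrow> Min (sym_diff S T) \<in> S"
        using assms by auto
      moreover have "E - T \<noteq> E - S" using False assms by blast
      ultimately show ?thesis
        using sorted_list_of_set_lexord_iff[OF fin \<open>card S = card T\<close> False]
          sorted_list_of_set_lexord_iff[of "E - T" "E - S"] assms(1) card \<open>card S = card T\<close>
        unfolding subset_less_def by simp
    qed
  qed
qed

lemma subset_pos_less:
  assumes "S \<subseteq> {1..t}" "subset_less S T"
  shows "subset_pos t S < subset_pos t T"
proof -
  let ?below = "\<lambda>X. {Y. Y \<subseteq> {1..t} \<and> subset_less Y X}"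
  have "?below S \<subseteq> ?below T" using subset_less_trans[OF _ assms(2)] by auto
  moreover have "S \<in> ?below T" "S \<notin> ?below S" using assms subset_less_irrefl by auto
  ultimately have "?below S \<subset> ?below T" by blast
  moreover have "finite (?below T)" by (rule finite_subset[of _ "Pow {1..t}"]) auto
  ultimately show ?thesis unfolding subset_pos_def by (simp add: psubset_card_mono)
qed

lemma inj_on_subset_pos: "inj_on (subset_pos t) (Pow {1..t})"
proof (rule inj_onI, rule ccontr)
  fix S T assume S: "S \<in> Pow {1..t}" and T: "T \<in> Pow {1..t}"
    and eq: "subset_pos t S = subset_pos t T" and "S \<noteq> T"
  then have "subset_less S T \<or> subset_less T S"
    using finite_subset by (intro subset_less_linear) auto
  then show False using subset_pos_less[of S t T] subset_pos_less[of T t S] S T eq by auto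
qed

lemma subset_pos_le:
  assumes "S \<subseteq> {1..t}"
  shows "subset_pos t S \<le> 2 ^ t"
proof -
  have "{Y. Y \<subseteq> {1..t} \<and> subset_less Y S} \<subseteq> Pow {1..t} - {S}"
    using subset_less_irrefl by auto
  then have "card {Y. Y \<subseteq> {1..t} \<and> subset_less Y S} \<le> card (Pow {1..t} - {S})"
    by (intro card_mono) auto
  also have "\<dots> = 2 ^ t - 1"
    using assms by (simp add: card_Pow)
  finally show ?thesis
    unfolding subset_pos_def using one_le_power[of "2::nat" t] by linarith
qed

lemma bij_betw_subset_pos: "bij_betw (subset_pos t) (Pow {1..t}) {1..2 ^ t}"
proof -
  have "subset_pos t ` Pow {1..t} \<subseteq> {1..2 ^ t}"
    using subset_pos_le by (force simp: subset_pos_def)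
  moreover have "card (subset_pos t ` Pow {1..t}) = card {1..(2::nat) ^ t}"
    using card_image[OF inj_on_subset_pos] by (simp add: card_Pow)
  ultimately show ?thesis
    unfolding bij_betw_def using inj_on_subset_pos by (simp add: card_subset_eq)
qed

lemma nth_subset_subset_pos: "S \<subseteq> {1..t} \<Longrightarrow> nth_subset t (subset_pos t S) = S"
  unfolding nth_subset_def
  by (rule the_equality) (use inj_on_subset_pos in \<open>auto simp: inj_on_def\<close>)

lemma nth_subset_inverse:
  assumes "k \<in> {1..2 ^ t}"
  shows "nth_subset t k \<subseteq> {1..t}" and "subset_pos t (nth_subset t k) = k"
proof -
  have "k \<in> subset_pos t ` Pow {1..t}"
    using assms bij_betw_subset_pos[of t] by (simp add: bij_betw_def)
  then obtain S where "S \<subseteq> {1..t}" "subset_pos t S = k" by blast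
  then show "nth_subset t k \<subseteq> {1..t}" "subset_pos t (nth_subset t k) = k"
    using nth_subset_subset_pos by auto
qed

lemma subset_pos_Diff:
  assumes "S \<subseteq> {1..t}"
  shows "subset_pos t ({1..t} - S) = 2 ^ t + 1 - subset_pos t S"
proof -
  let ?E = "{1..t}"
  define below where "below X = {Y. Y \<subseteq> ?E \<and> subset_less Y X}" for X
  define above where "above = {Y. Y \<subseteq> ?E \<and> subset_less S Y}"
  have "below (?E - S) = (\<lambda>Y. ?E - Y) ` above"
  proof (intro set_eqI iffI)
    fix Y assume Y: "Y \<in> below (?E - S)"
    then have "?E - Y \<in> above"
      using subset_less_Diff_iff[of ?E Y "?E - S"] assms by (simp add: below_def above_def double_diff)
    moreover have "Y = ?E - (?E - Y)" using Y by (auto simp: below_def)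
    ultimately show "Y \<in> (\<lambda>Y. ?E - Y) ` above" by blast
  next
    fix Y assume "Y \<in> (\<lambda>Y. ?E - Y) ` above"
    then obtain X where "X \<in> above" "Y = ?E - X" by blast
    then show "Y \<in> below (?E - S)"
      using subset_less_Diff_iff[of ?E S X] assms by (simp add: above_def below_def)
  qed
  moreover have "inj_on (\<lambda>Y. ?E - Y) above" by (rule inj_onI) (auto simp: above_def)
  ultimately have card_below_Diff: "card (below (?E - S)) = card above" by (simp add: card_image)
  have fin: "finite (below S)" "finite above"
    by (rule finite_subset[of _ "Pow ?E"], auto simp: below_def above_def)+
  have Pow_eq: "Pow ?E = insert S (below S \<union> above)"
  proof (intro set_eqI iffI)
    fix Y assume Y: "Y \<in> Pow ?E"
    then have "Y = S \<or> subset_less Y S \<or> subset_less S Y"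
      using subset_less_linear[of Y S] finite_subset[of Y ?E] finite_subset[OF assms] by blast
    then show "Y \<in> insert S (below S \<union> above)" using Y by (auto simp: below_def above_def)
  qed (use assms in \<open>auto simp: below_def above_def\<close>)
  have "S \<notin> below S \<union> above"
    using subset_less_irrefl by (simp add: below_def above_def)
  have "Y \<notin> above" if "Y \<in> below S" for Y
    using that subset_less_trans[of Y S Y] subset_less_irrefl[of Y] by (auto simp: below_def above_def)
  then have "below S \<inter> above = {}" by blast
  have "(2::nat) ^ t = card (Pow ?E)" by (simp add: card_Pow)
  also have "\<dots> = Suc (card (below S) + card above)"
    unfolding Pow_eq using fin \<open>S \<notin> below S \<union> above\<close> \<open>below S \<inter> above = {}\<close>
    by (simp add: card_Un_disjoint)
  finally show ?thesis
    using card_below_Diff unfolding subset_pos_def below_def by simp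
qed

lemma nth_subset_Diff:
  assumes "k \<in> {1..2 ^ t}"
  shows "nth_subset t (2 ^ t + 1 - k) = {1..t} - nth_subset t k"
  using subset_pos_Diff[OF nth_subset_inverse(1)[OF assms]] nth_subset_inverse[OF assms]
    nth_subset_subset_pos[of "{1..t} - nth_subset t k" t] by simp

lemma nth_subset_first: "nth_subset t 1 = {}"
proof -
  have "subset_pos t {} = 1"
    unfolding subset_pos_def subset_less_def by simp
  then show ?thesis using nth_subset_subset_pos[of "{}" t] by simp
qed

lemma nth_subset_last: "nth_subset t (2 ^ t) = {1..t}"
  using nth_subset_Diff[of 1 t] nth_subset_first by simp

section \<open>Reversal and shift matrices\<close>

lemma sum_apply: "sum f A x = (\<Sum>a\<in>A. f a x)"
  by (induction A rule: infinite_finite_induct) auto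

lemma vecmat_Ubar: "vecmat N v (Ubar N) = (\<lambda>j. if j \<in> {1..N} then v (N + 1 - j) else 0)"
proof -
  have "(\<Sum>i=1..N. v i * Ubar N i j) = v (N + 1 - j)" if "j \<in> {1..N}" for j
  proof -
    have "(\<Sum>i=1..N. v i * Ubar N i j) = (\<Sum>i=1..N. if i = N + 1 - j then v i else 0)"
      using that by (intro sum.cong) (auto simp: Ubar_def)
    then show ?thesis using that by auto
  qed
  then show ?thesis by (simp add: vecmat_def fun_eq_iff)
qed

lemma vecmat_Tbar: "vecmat N v (Tbar N) = (\<lambda>j. if j \<in> {2..N} then v (j - 1) else 0)"
proof -
  have "(\<Sum>i=1..N. v i * Tbar N i j) = (if 2 \<le> j then v (j - 1) else 0)" if "j \<in> {1..N}" for j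
  proof -
    have "(\<Sum>i=1..N. v i * Tbar N i j) = (\<Sum>i=1..N. if i = j - 1 then (if 2 \<le> j then v i else 0) else 0)"
      using that by (intro sum.cong) (auto simp: Tbar_def)
    then show ?thesis using that by auto
  qed
  then show ?thesis by (auto simp: vecmat_def fun_eq_iff)
qed

lemma vecmat_reverse_shift:
  "vecmat N (vecmat N x (Ubar N)) (Tbar N) = (\<lambda>m. if m \<in> {2..N} then x (N + 2 - m) else 0)"
  by (auto simp: vecmat_Ubar vecmat_Tbar fun_eq_iff Suc_diff_Suc numeral_2_eq_2)

lemma vecmat_diff: "vecmat N (v - w) M = vecmat N v M - vecmat N w M"
  by (simp add: vecmat_def fun_eq_iff algebra_simps sum_subtractf)

lemma vecmat_sum: "vecmat N (\<Sum>a\<in>A. f a) M = (\<Sum>a\<in>A. vecmat N (f a) M)"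
proof
  fix j
  show "vecmat N (\<Sum>a\<in>A. f a) M j = (\<Sum>a\<in>A. vecmat N (f a) M) j"
  proof (cases "j \<in> {1..N}")
    case True
    then show ?thesis
      by (simp add: vecmat_def sum_apply sum_distrib_right) (rule sum.swap)
  qed (auto simp: vecmat_def sum_apply)
qed

lemma vecmat_reverse_shift_sigma:
  "e \<in> {2..N} \<Longrightarrow> vecmat N (vecmat N (sigma e) (Ubar N)) (Tbar N) = sigma (N + 2 - e)"
  by (auto simp: vecmat_reverse_shift sigma_def fun_eq_iff)

lemma card_support_reverse_shift:
  fixes x :: "nat \<Rightarrow> int"
  assumes "x 1 = 0"
  shows "card {m \<in> {1..N}. vecmat N (vecmat N x (Ubar N)) (Tbar N) m \<noteq> 0} = card {m \<in> {1..N}. x m \<noteq> 0}"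
proof -
  have "2 \<le> m" if "1 \<le> m" "x m \<noteq> 0" for m
    using that assms by (cases "m = 1") auto
  then have "{m \<in> {1..N}. x m \<noteq> 0} = {m \<in> {2..N}. x m \<noteq> 0}" by auto
  moreover have "{m \<in> {1..N}. vecmat N (vecmat N x (Ubar N)) (Tbar N) m \<noteq> 0}
      = {m \<in> {2..N}. x (N + 2 - m) \<noteq> 0}"
    by (auto simp: vecmat_reverse_shift)
  moreover have "bij_betw (\<lambda>m. N + 2 - m) {m \<in> {2..N}. x (N + 2 - m) \<noteq> 0} {m \<in> {2..N}. x m \<noteq> 0}"
    by (rule bij_betw_byWitness[where f' = "\<lambda>m. N + 2 - m"]) auto
  ultimately show ?thesis by (simp add: bij_betw_same_card)
qed

lemma sum_sigma_apply:
  assumes "finite K" "inj_on f K"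
  shows "(\<Sum>k\<in>K. sigma (f k)) m = (if m \<in> f ` K then 1 else 0)"
proof -
  have "(\<Sum>k\<in>K. sigma (f k)) m = of_nat (card (K \<inter> {k. m = f k}))"
    using assms(1) by (simp add: sum_apply sigma_def of_bool_def[symmetric])
  moreover have "K \<inter> {k. m = f k} = {k}" if "k \<in> K" "m = f k" for k
    using that assms(2) by (auto simp: inj_on_def)
  moreover have "K \<inter> {k. m = f k} = {}" if "m \<notin> f ` K"
    using that by blast
  ultimately show ?thesis by auto
qed

lemma card_support_sigma_diff:
  assumes "finite K" "finite L" "inj_on f K" "inj_on g L"
    and "f ` K \<inter> g ` L = {}" "f ` K \<union> g ` L \<subseteq> A"
  shows "card {m \<in> A. ((\<Sum>k\<in>K. sigma (f k)) - (\<Sum>l\<in>L. sigma (g l))) m \<noteq> 0} = card K + card L"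
proof -
  have "{m \<in> A. ((\<Sum>k\<in>K. sigma (f k)) - (\<Sum>l\<in>L. sigma (g l))) m \<noteq> 0} = f ` K \<union> g ` L"
    using assms by (auto simp: sum_sigma_apply)
  then show ?thesis using assms by (simp add: card_Un_disjoint card_image)
qed

section \<open>The tope of the blocker\<close>

lemma nontrivial_clutter_empty_notin:
  assumes "nontrivial_clutter t \<A>"
  shows "{} \<notin> \<A>"
proof
  assume "{} \<in> \<A>"
  then have "\<A> = {{}}" using assms unfolding nontrivial_clutter_def clutter_def by blast
  then show False using assms unfolding nontrivial_clutter_def by blast
qed

lemma upcl_blocker_iff:
  assumes "D \<subseteq> {1..t}"
  shows "D \<in> upcl t (blocker t \<A>) \<longleftrightarrow> meets_all \<A> D"
proof
  assume "D \<in> upcl t (blocker t \<A>)"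
  then obtain B where "B \<subseteq> D" "meets_all \<A> B"
    unfolding upcl_def blocker_def by blast
  then show "meets_all \<A> D" unfolding meets_all_def by blast
next
  assume "meets_all \<A> D"
  moreover have "finite {B. B \<subseteq> D \<and> meets_all \<A> B}"
    using finite_subset[OF assms] by simp
  ultimately obtain B where B: "B \<subseteq> D" "meets_all \<A> B"
    and minimal: "\<And>B'. B' \<subseteq> D \<Longrightarrow> meets_all \<A> B' \<Longrightarrow> B' \<subseteq> B \<Longrightarrow> B = B'"
    using finite_has_minimal2[of "{B. B \<subseteq> D \<and> meets_all \<A> B}" D] by auto
  have "\<not> meets_all \<A> B'" if "B' \<subset> B" for B'
    using minimal[of B'] that B(1) by blast
  then have "B \<in> blocker t \<A>"
    unfolding blocker_def using B assms by blast
  then show "D \<in> upcl t (blocker t \<A>)" unfolding upcl_def using B assms by blast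
qed

lemma Diff_mem_upcl_iff:
  assumes "\<forall>A\<in>\<A>. A \<subseteq> {1..t}"
  shows "{1..t} - S \<in> upcl t \<A> \<longleftrightarrow> \<not> meets_all \<A> S"
proof -
  have "C \<subseteq> {1..t} - S \<longleftrightarrow> S \<inter> C = {}" if "C \<in> \<A>" for C
    using assms that by blast
  then show ?thesis unfolding upcl_def meets_all_def by auto
qed

lemma tope_upcl_blocker:
  assumes "\<forall>A\<in>\<A>. A \<subseteq> {1..t}"
  shows "tope t (upcl t (blocker t \<A>)) = - vecmat (2 ^ t) (tope t (upcl t \<A>)) (Ubar (2 ^ t))"
proof
  fix k
  show "tope t (upcl t (blocker t \<A>)) k = (- vecmat (2 ^ t) (tope t (upcl t \<A>)) (Ubar (2 ^ t))) k"
  proof (cases "k \<in> {1..2 ^ t}")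
    case True
    have "2 ^ t + 1 - k \<in> {1..2 ^ t}" using True by auto
    then show ?thesis
      using True nth_subset_Diff[OF True] Diff_mem_upcl_iff[OF assms]
        upcl_blocker_iff[OF nth_subset_inverse(1)[OF True]]
      by (simp add: tope_def vecmat_Ubar)
  qed (simp add: tope_def vecmat_Ubar)
qed

lemma tope_upcl_first: "{} \<notin> \<A> \<Longrightarrow> tope t (upcl t \<A>) 1 = 1"
  using nth_subset_first[of t] by (auto simp: tope_def upcl_def)

lemma tope_upcl_last:
  "\<A> \<noteq> {} \<Longrightarrow> \<forall>A\<in>\<A>. A \<subseteq> {1..t} \<Longrightarrow> tope t (upcl t \<A>) (2 ^ t) = -1"
  by (auto simp: tope_def upcl_def nth_subset_last)

section \<open>Coordinates with respect to the symmetric cycle\<close>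

definition sign_vector :: "nat \<Rightarrow> (nat \<Rightarrow> int) \<Rightarrow> bool" where
  "sign_vector N T \<longleftrightarrow> (\<forall>k\<in>{1..N}. T k \<in> {-1, 1}) \<and> (\<forall>k. k \<notin> {1..N} \<longrightarrow> T k = 0)"

lemma sign_vector_tope: "sign_vector (2 ^ t) (tope t \<F>)"
  by (simp add: sign_vector_def tope_def)

lemma sign_vector_neg_reverse:
  assumes "sign_vector N T"
  shows "sign_vector N (- vecmat N T (Ubar N))"
proof -
  have "(- vecmat N T (Ubar N)) k \<in> {-1, 1}" if "k \<in> {1..N}" for k
  proof -
    have "N + 1 - k \<in> {1..N}" using that by auto
    then have "T (N + 1 - k) \<in> {-1, 1}" using assms unfolding sign_vector_def by blast
    then show ?thesis using that by (auto simp: vecmat_Ubar)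
  qed
  then show ?thesis unfolding sign_vector_def by (simp add: vecmat_Ubar)
qed

definition rcomb :: "nat \<Rightarrow> (nat \<Rightarrow> int) \<Rightarrow> nat \<Rightarrow> int" where
  "rcomb N x = (\<lambda>k. \<Sum>i=1..N. x i * Rvec N (i - 1) k)"

lemma rcomb_Suc_diff:
  assumes "1 \<le> k" "k < N"
  shows "rcomb N x (Suc k) - rcomb N x k = 2 * x (Suc k)"
proof -
  have "rcomb N x (Suc k) - rcomb N x k = (\<Sum>i=1..N. x i * (Rvec N (i - 1) (Suc k) - Rvec N (i - 1) k))"
    by (simp add: rcomb_def sum_subtractf algebra_simps)
  also have "\<dots> = (\<Sum>i=1..N. if i = Suc k then 2 * x i else 0)"
    using assms by (intro sum.cong) (auto simp: Rvec_def)
  finally show ?thesis using assms by simp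
qed

lemma rcomb_first_last:
  assumes "1 \<le> N"
  shows "rcomb N x 1 + rcomb N x N = 2 * x 1"
proof -
  have "rcomb N x 1 + rcomb N x N = (\<Sum>i=1..N. x i * (Rvec N (i - 1) 1 + Rvec N (i - 1) N))"
    by (simp add: rcomb_def sum.distrib algebra_simps)
  also have "\<dots> = (\<Sum>i=1..N. if i = 1 then 2 * x i else 0)"
    using assms by (intro sum.cong) (auto simp: Rvec_def)
  finally show ?thesis using assms by simp
qed

lemma rcomb_outside: "k \<notin> {1..N} \<Longrightarrow> rcomb N x k = 0"
  by (auto simp: rcomb_def Rvec_def)

lemma eq_rcomb_iff:
  assumes "1 \<le> N" and T0: "\<forall>k. k \<notin> {1..N} \<longrightarrow> T k = 0"
  shows "T = rcomb N x \<longleftrightarrow> 2 * x 1 = T 1 + T N \<and> (\<forall>k\<in>{2..N}. 2 * x k = T k - T (k - 1))"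
proof
  assume T: "T = rcomb N x"
  have "2 * x k = T k - T (k - 1)" if "k \<in> {2..N}" for k
    using rcomb_Suc_diff[of "k - 1" N x] that T by auto
  then show "2 * x 1 = T 1 + T N \<and> (\<forall>k\<in>{2..N}. 2 * x k = T k - T (k - 1))"
    using rcomb_first_last[OF assms(1)] T by simp
next
  assume x: "2 * x 1 = T 1 + T N \<and> (\<forall>k\<in>{2..N}. 2 * x k = T k - T (k - 1))"
  define D where "D k = rcomb N x k - T k" for k
  have step: "D (Suc k) = D k" if "1 \<le> k" "k < N" for k
    using rcomb_Suc_diff[OF that, of x] x that by (simp add: D_def)
  have const: "k \<le> N \<Longrightarrow> D k = D 1" if "1 \<le> k" for k
    using that
  proof (induction k rule: nat_induct_at_least)
    case (Suc k)
    then show ?case using step[of k] by simp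
  qed simp
  have "D 1 + D N = 0" using rcomb_first_last[OF assms(1), of x] x unfolding D_def by linarith
  then have "D 1 = 0" using const[of N] assms(1) by simp
  show "T = rcomb N x"
  proof
    fix k
    show "T k = rcomb N x k"
      using const[of k] \<open>D 1 = 0\<close> T0 rcomb_outside[of k N x]
      by (cases "k \<in> {1..N}") (auto simp: D_def)
  qed
qed

lemma xvec_sign_vector:
  assumes "1 \<le> N" "sign_vector N T"
  shows "xvec N T = (\<lambda>k. if k = 1 then (T 1 + T N) div 2
                         else if k \<in> {2..N} then (T k - T (k - 1)) div 2 else 0)"
    (is "_ = ?x")
proof -
  have T_pm: "T k \<in> {-1, 1}" if "k \<in> {1..N}" for k
    using assms(2) that by (simp add: sign_vector_def)
  have T0: "\<forall>k. k \<notin> {1..N} \<longrightarrow> T k = 0"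
    using assms(2) by (simp add: sign_vector_def)
  have half: "2 * ((a + b) div 2) = a + b \<and> (a + b) div 2 \<in> {-1, 0, 1}"
    if "a \<in> {-1, 1}" "b \<in> {-1, 1}" for a b :: int
    using that by auto
  have half_first: "2 * ?x 1 = T 1 + T N \<and> ?x 1 \<in> {-1, 0, 1}"
    using half[OF T_pm T_pm] assms(1) by simp
  have half_step: "2 * ?x k = T k - T (k - 1) \<and> ?x k \<in> {-1, 0, 1}" if "k \<in> {2..N}" for k
  proof -
    have "k - 1 \<in> {1..N}" using that by auto
    then have "- T (k - 1) \<in> {-1, 1}" using T_pm[of "k - 1"] by auto
    from half[OF T_pm[of k] this] show ?thesis using that by simp
  qed
  have "T = rcomb N ?x"
    using half_first half_step by (simp add: eq_rcomb_iff[OF assms(1) T0])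
  moreover have "\<forall>k. ?x k \<in> {-1, 0, 1}"
    using half_first half_step by auto
  moreover have "\<forall>k. k \<notin> {1..N} \<longrightarrow> ?x k = 0"
    using assms(1) by auto
  moreover have "x = ?x" if "\<forall>k. k \<notin> {1..N} \<longrightarrow> x k = 0" "T = rcomb N x" for x
  proof
    fix k
    have x_first: "2 * x 1 = T 1 + T N" and x_step: "\<forall>k\<in>{2..N}. 2 * x k = T k - T (k - 1)"
      using that(2) eq_rcomb_iff[OF assms(1) T0, of x] by auto
    consider "k = 1" | "k \<in> {2..N}" | "k \<notin> {1..N}" by fastforce
    then show "x k = ?x k"
    proof cases
      case 1
      then show ?thesis using x_first half_first by simp
    next
      case 2
      then have "2 * x k = 2 * ?x k" using x_step half_step[of k] by simp
      then show ?thesis by simp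
    next
      case 3
      then show ?thesis using that(1) assms(1) by auto
    qed
  qed
  ultimately show ?thesis
    unfolding xvec_def rcomb_def[symmetric] by (intro the_equality) blast+
qed

lemma xvec_neg_reverse:
  assumes "1 \<le> N" "sign_vector N T" "T 1 = - T N"
  shows "xvec N (- vecmat N T (Ubar N)) = vecmat N (vecmat N (xvec N T) (Ubar N)) (Tbar N)"
proof
  fix m
  let ?T' = "- vecmat N T (Ubar N)"
  have T': "?T' k = - T (N + 1 - k)" if "k \<in> {1..N}" for k
    using that by (simp add: vecmat_Ubar)
  note xvec_T' = xvec_sign_vector[OF assms(1) sign_vector_neg_reverse[OF assms(2)]]
  consider "m = 1" | "m \<in> {2..N}" | "m \<notin> {1..N}" by fastforce
  then show "xvec N ?T' m = vecmat N (vecmat N (xvec N T) (Ubar N)) (Tbar N) m"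
  proof cases
    case 1
    then show ?thesis using assms T'[of 1] T'[of N] by (simp add: xvec_T' vecmat_reverse_shift)
  next
    case 2
    then have "N + 2 - m \<in> {2..N}" "N + 2 - m - 1 = N + 1 - m" "N + 1 - (m - 1) = N + 2 - m"
      "m - 1 \<in> {1..N}" by auto
    then show ?thesis using 2 T'[of m] T'[of "m - 1"]
      by (simp add: xvec_T' vecmat_reverse_shift xvec_sign_vector[OF assms(1,2)])
  next
    case 3
    then show ?thesis using assms(1) by (auto simp: xvec_T' vecmat_reverse_shift)
  qed
qed

lemma qnum_neg_reverse:
  assumes "1 \<le> N" "sign_vector N T" "T 1 = - T N"
  shows "qnum N (- vecmat N T (Ubar N)) = qnum N T"
  unfolding qnum_def xvec_neg_reverse[OF assms]
  by (rule card_support_reverse_shift) (use assms(3) in \<open>simp add: xvec_sign_vector[OF assms(1,2)]\<close>)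

section \<open>Topes whose negative entries form separated intervals\<close>

lemma of_bool_interval_diff:
  assumes "1 \<le> m" "a \<le> b"
  shows "of_bool (m - 1 \<in> {a..b}) - of_bool (m \<in> {a..b}) = sigma (b + 1) m - sigma a m"
  using assms by (auto simp: sigma_def)

locale separated_intervals =
  fixes \<rho> :: nat and i j :: "nat \<Rightarrow> nat"
  assumes interval_le: "k \<in> {1..\<rho>} \<Longrightarrow> i k \<le> j k"
    and interval_gap: "k \<in> {1..\<rho> - 1} \<Longrightarrow> j k + 2 \<le> i (k + 1)"
begin

abbreviation covered :: "nat set" where
  "covered \<equiv> \<Union>k\<in>{1..\<rho>}. {i k..j k}"

lemma gap_less:
  assumes "1 \<le> k" "k < l" "l \<le> \<rho>"
  shows "j k + 2 \<le> i l"
proof -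
  have "Suc k \<le> l" using assms(2) by simp
  then have "l \<le> \<rho> \<longrightarrow> j k + 2 \<le> i l"
  proof (induction l rule: nat_induct_at_least)
    case base
    then show ?case using interval_gap assms(1) by auto
  next
    case (Suc l)
    have "l \<le> \<rho> \<Longrightarrow> i l \<le> j l" using interval_le Suc.hyps assms(1) by auto
    moreover have "Suc l \<le> \<rho> \<Longrightarrow> j l + 2 \<le> i (Suc l)"
      using interval_gap Suc.hyps assms(1) by auto
    ultimately show ?case using Suc.IH by auto
  qed
  then show ?thesis using assms(3) by blast
qed

(* The gaps keep the intervals disjoint even after appending j k + 1 to each, so no interval
   start can cancel against the successor of an interval end. *)
lemma extended_intervals_disjoint:
  assumes "k \<in> {1..\<rho>}" "l \<in> {1..\<rho>}" "m \<in> {i k..j k + 1}" "m \<in> {i l..j l + 1}"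
  shows "k = l"
proof (rule ccontr)
  assume "k \<noteq> l"
  then consider "k < l" | "l < k" by linarith
  then show False
    by cases (use assms gap_less[of k l] gap_less[of l k] in auto)
qed

lemma inj_on_start: "inj_on i {1..\<rho>}"
proof (rule inj_onI)
  fix k l assume "k \<in> {1..\<rho>}" "l \<in> {1..\<rho>}" "i k = i l"
  then show "k = l"
    using interval_le[of k] interval_le[of l] by (intro extended_intervals_disjoint[of k l "i k"]) auto
qed

lemma inj_on_end_Suc: "inj_on (\<lambda>k. j k + 1) {1..\<rho>}"
proof (rule inj_onI)
  fix k l assume "k \<in> {1..\<rho>}" "l \<in> {1..\<rho>}" "j k + 1 = j l + 1"
  then show "k = l"
    using interval_le[of k] interval_le[of l]
    by (intro extended_intervals_disjoint[of k l "j k + 1"]) auto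
qed

lemma start_ne_end_Suc:
  assumes "k \<in> {1..\<rho>}" "l \<in> {1..\<rho>}"
  shows "i l \<noteq> j k + 1"
proof
  assume eq: "i l = j k + 1"
  then have "k = l"
    using assms interval_le[of k] interval_le[of l]
    by (intro extended_intervals_disjoint[of k l "i l"]) auto
  then show False using eq interval_le[of k] assms by auto
qed

lemma of_bool_mem_covered:
  "of_bool (m \<in> covered) = (\<Sum>k=1..\<rho>. of_bool (m \<in> {i k..j k}) :: int)"
proof (cases "m \<in> covered")
  case True
  then obtain k where k: "k \<in> {1..\<rho>}" "m \<in> {i k..j k}" by blast
  then have "{1..\<rho>} \<inter> {l. m \<in> {i l..j l}} = {k}"
    using extended_intervals_disjoint[of k _ m] by fastforce
  then show ?thesis using True by simp
qed auto

lemma covered_boundary: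
  assumes "1 \<le> m"
  shows "of_bool (m - 1 \<in> covered) - of_bool (m \<in> covered)
    = (\<Sum>k=1..\<rho>. sigma (j k + 1) m) - (\<Sum>k=1..\<rho>. sigma (i k) m)"
proof -
  have "of_bool (m - 1 \<in> covered) - of_bool (m \<in> covered)
      = (\<Sum>k=1..\<rho>. of_bool (m - 1 \<in> {i k..j k}) - of_bool (m \<in> {i k..j k}) :: int)"
    by (simp only: of_bool_mem_covered sum_subtractf)
  also have "\<dots> = (\<Sum>k=1..\<rho>. sigma (j k + 1) m - sigma (i k) m)"
    using assms by (intro sum.cong refl of_bool_interval_diff interval_le)
  finally show ?thesis by (simp add: sum_subtractf)
qed

end

locale sign_vector_intervals = separated_intervals +
  fixes N :: nat and T :: "nat \<Rightarrow> int"
  assumes sign_vector: "sign_vector N T"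
    and first: "T 1 = 1" and last: "T N = -1"
    and neg_set: "{k \<in> {1..N}. T k = -1} = covered"
begin

lemma N_pos: "1 \<le> N"
  using sign_vector first by (auto simp: sign_vector_def)

lemma mem_covered_iff: "k \<in> covered \<longleftrightarrow> k \<in> {1..N} \<and> T k = -1"
  unfolding neg_set[symmetric] by simp

lemma T_eq:
  assumes "k \<in> {1..N}"
  shows "T k = (if k \<in> covered then -1 else 1)"
proof -
  have "T k \<in> {-1, 1}" using sign_vector assms by (simp add: sign_vector_def)
  then show ?thesis using assms mem_covered_iff by auto
qed

lemma first_not_covered: "1 \<notin> covered"
  using first mem_covered_iff by simp

lemma last_covered: "N \<in> covered"
  using last N_pos mem_covered_iff by simp

lemma rho_pos: "1 \<le> \<rho>"
  using last_covered by auto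

lemma start_range:
  assumes "l \<in> {1..\<rho>}"
  shows "i l \<in> {2..N}"
proof -
  have "i l \<in> covered" using assms interval_le[of l] by auto
  then have "i l \<in> {1..N}" "i l \<noteq> 1"
    using mem_covered_iff[of "i l"] first_not_covered by (simp, metis)
  then show ?thesis by auto
qed

lemma end_last: "j \<rho> = N"
proof -
  obtain k where k: "k \<in> {1..\<rho>}" "N \<in> {i k..j k}" using last_covered by blast
  have "j k \<in> covered" using k interval_le[of k] by (intro UN_I[of k]) auto
  then have "j k \<le> N" using mem_covered_iff[of "j k"] by simp
  then have "j k = N" using k by auto
  moreover have "\<not> k < \<rho>"
    using gap_less[of k \<rho>] start_range[of \<rho>] rho_pos k \<open>j k = N\<close> by auto
  ultimately show ?thesis using k by auto
qed

lemma end_range: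
  assumes "k \<in> {1..\<rho> - 1}"
  shows "j k + 1 \<in> {2..N}"
proof -
  have "k \<in> {1..\<rho>}" "k < \<rho>" using assms by auto
  then show ?thesis
    using gap_less[of k \<rho>] start_range[of \<rho>] start_range[of k] interval_le[of k] rho_pos by auto
qed

lemma xvec_eq: "xvec N T = (\<Sum>k=1..\<rho> - 1. sigma (j k + 1)) - (\<Sum>l=1..\<rho>. sigma (i l))"
proof
  fix m
  have sigma_outside: "sigma e m = 0" if "e \<in> {2..N}" "m \<notin> {2..N}" for e
    using that by (auto simp: sigma_def)
  show "xvec N T m = ((\<Sum>k=1..\<rho> - 1. sigma (j k + 1)) - (\<Sum>l=1..\<rho>. sigma (i l))) m"
  proof (cases "m \<in> {2..N}")
    case True
    have "{1..\<rho>} = insert \<rho> {1..\<rho> - 1}" using rho_pos by auto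
    then have "(\<Sum>k=1..\<rho>. sigma (j k + 1) m) = sigma (j \<rho> + 1) m + (\<Sum>k=1..\<rho> - 1. sigma (j k + 1) m)"
      using rho_pos by simp
    moreover have "sigma (j \<rho> + 1) m = 0" using True end_last by (simp add: sigma_def)
    moreover have "xvec N T m = of_bool (m - 1 \<in> covered) - of_bool (m \<in> covered)"
    proof -
      have "m \<in> {1..N}" "m - 1 \<in> {1..N}" using True by auto
      moreover have "xvec N T m = (T m - T (m - 1)) div 2"
        using True by (simp add: xvec_sign_vector[OF N_pos sign_vector])
      ultimately show ?thesis by (auto simp: T_eq)
    qed
    ultimately show ?thesis using True covered_boundary[of m] by (simp add: sum_apply)
  next
    case False
    then have "xvec N T m = 0"
      using first last by (auto simp: xvec_sign_vector[OF N_pos sign_vector])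
    then show ?thesis
      using False start_range end_range by (simp add: sum_apply sigma_outside)
  qed
qed

lemma qnum_eq: "qnum N T = 2 * \<rho> - 1"
proof -
  have "card {m \<in> {1..N}. xvec N T m \<noteq> 0} = card {1..\<rho> - 1} + card {1..\<rho>}"
    unfolding xvec_eq
  proof (rule card_support_sigma_diff)
    show "inj_on (\<lambda>k. j k + 1) {1..\<rho> - 1}"
      by (rule inj_on_subset[OF inj_on_end_Suc]) auto
    show "(\<lambda>k. j k + 1) ` {1..\<rho> - 1} \<inter> i ` {1..\<rho>} = {}"
      using start_ne_end_Suc by fastforce
    show "(\<lambda>k. j k + 1) ` {1..\<rho> - 1} \<union> i ` {1..\<rho>} \<subseteq> {1..N}"
      using start_range end_range by fastforce
    show "inj_on i {1..\<rho>}" by (rule inj_on_start)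
  qed simp_all
  then show ?thesis using rho_pos by (simp add: qnum_def)
qed

lemma xvec_neg_reverse_eq:
  "xvec N (- vecmat N T (Ubar N))
    = (\<Sum>k=1..\<rho> - 1. sigma (N - j k + 1)) - (\<Sum>l=1..\<rho>. sigma (N - i l + 2))"
proof -
  have reverse_end: "vecmat N (vecmat N (sigma (j k + 1)) (Ubar N)) (Tbar N) = sigma (N - j k + 1)"
    if "k \<in> {1..\<rho> - 1}" for k
    using vecmat_reverse_shift_sigma[OF end_range[OF that]] end_range[OF that]
    by (simp add: Suc_diff_le)
  have reverse_start: "vecmat N (vecmat N (sigma (i l)) (Ubar N)) (Tbar N) = sigma (N - i l + 2)"
    if "l \<in> {1..\<rho>}" for l
    using vecmat_reverse_shift_sigma[OF start_range[OF that]] start_range[OF that]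
    by (simp add: Suc_diff_le)
  have "xvec N (- vecmat N T (Ubar N))
      = (\<Sum>k=1..\<rho> - 1. vecmat N (vecmat N (sigma (j k + 1)) (Ubar N)) (Tbar N))
        - (\<Sum>l=1..\<rho>. vecmat N (vecmat N (sigma (i l)) (Ubar N)) (Tbar N))"
    using xvec_neg_reverse[OF N_pos sign_vector] first last
    by (simp add: xvec_eq vecmat_diff vecmat_sum)
  also have "\<dots> = (\<Sum>k=1..\<rho> - 1. sigma (N - j k + 1)) - (\<Sum>l=1..\<rho>. sigma (N - i l + 2))"
    using reverse_end reverse_start by (intro arg_cong2[where f = "(-)"] sum.cong refl) auto
  finally show ?thesis .
qed

lemma xvec_qnum_formulas:
  "qnum N (- vecmat N T (Ubar N)) = 2 * \<rho> - 1
    \<and> qnum N T = 2 * \<rho> - 1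
    \<and> xvec N T = (\<Sum>k=1..\<rho> - 1. sigma (j k + 1)) - (\<Sum>l=1..\<rho>. sigma (i l))
    \<and> xvec N (- vecmat N T (Ubar N))
        = (\<Sum>k=1..\<rho> - 1. sigma (N - j k + 1)) - (\<Sum>l=1..\<rho>. sigma (N - i l + 2))"
  using qnum_neg_reverse[OF N_pos sign_vector] first last qnum_eq xvec_eq xvec_neg_reverse_eq
  by simp

end

theorem theorem6p3:
  fixes t :: nat and \<A> :: "nat set set"
  assumes "t \<ge> 3"
    and "nontrivial_clutter t \<A>"
  defines "\<B> \<equiv> blocker t \<A>"
  defines "N \<equiv> (2::nat) ^ t"
  shows "tope t (upcl t \<B>) = - vecmat N (tope t (upcl t \<A>)) (Ubar N)
    \<and> qnum N (tope t (upcl t \<B>)) = qnum N (tope t (upcl t \<A>))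
    \<and> xvec N (tope t (upcl t \<B>)) = vecmat N (vecmat N (xvec N (tope t (upcl t \<A>))) (Ubar N)) (Tbar N)
    \<and> (\<forall>(\<rho>::nat) (i::nat \<Rightarrow> nat) (j::nat \<Rightarrow> nat).
          {k \<in> {1..N}. tope t (upcl t \<A>) k = -1} = (\<Union>k\<in>{1..\<rho>}. {i k..j k})
          \<and> (\<forall>k\<in>{1..\<rho>}. i k \<le> j k)
          \<and> (\<forall>k\<in>{1..\<rho> - 1}. j k + 2 \<le> i (k + 1))
        \<longrightarrow> qnum N (tope t (upcl t \<B>)) = 2 * \<rho> - 1
          \<and> qnum N (tope t (upcl t \<A>)) = 2 * \<rho> - 1
          \<and> xvec N (tope t (upcl t \<A>)) = (\<Sum>k=1..\<rho> - 1. sigma (j k + 1)) - (\<Sum>l=1..\<rho>. sigma (i l))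
          \<and> xvec N (tope t (upcl t \<B>)) = (\<Sum>k=1..\<rho> - 1. sigma (N - j k + 1)) - (\<Sum>l=1..\<rho>. sigma (N - i l + 2)))"
proof -
  let ?a = "tope t (upcl t \<A>)"
  have sets: "\<forall>A\<in>\<A>. A \<subseteq> {1..t}" and "\<A> \<noteq> {}"
    using assms(2) by (auto simp: nontrivial_clutter_def clutter_def)
  have N: "1 \<le> N" by (simp add: N_def)
  have sv: "sign_vector N ?a" unfolding N_def by (rule sign_vector_tope)
  have first: "?a 1 = 1"
    using tope_upcl_first nontrivial_clutter_empty_notin[OF assms(2)] by blast
  have last: "?a N = -1"
    unfolding N_def using tope_upcl_last[OF \<open>\<A> \<noteq> {}\<close> sets] .
  then have antipodal: "?a 1 = - ?a N" using first by simp
  have tope_B: "tope t (upcl t \<B>) = - vecmat N ?a (Ubar N)"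
    unfolding \<B>_def N_def by (rule tope_upcl_blocker[OF sets])
  have intervals: "sign_vector_intervals \<rho> i j N ?a"
    if "{k \<in> {1..N}. ?a k = -1} = (\<Union>k\<in>{1..\<rho>}. {i k..j k})
      \<and> (\<forall>k\<in>{1..\<rho>}. i k \<le> j k) \<and> (\<forall>k\<in>{1..\<rho> - 1}. j k + 2 \<le> i (k + 1))" for \<rho> i j
    using that sv first last by unfold_locales auto
  show ?thesis
    unfolding tope_B
    using xvec_neg_reverse[OF N sv antipodal] qnum_neg_reverse[OF N sv antipodal]
      sign_vector_intervals.xvec_qnum_formulas[OF intervals]
    by blast
qed

end
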